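(* If $Z\subseteq A^+$ is an alt-induced code, then $Z^n$ is an alt-induced code for every integer $n\ge1$.
   Context: $A$ is a finite alphabet, $A^+$ the set of non-empty words; $Z^1=Z$, $Z^{n+1}=Z^nZ$ where $XY=\{xy:x\in X,y\in Y\}$. A set $Z\subseteq A^+$ is a code if every word admits at most one factorization into words of $Z$. For non-empty $X,Y\subseteq A^+$, $(X,Y)$ is an alternative code if no word of $A^+$ admits two different similar alternative factorizations on $(X,Y)$ (factorizations $u_1\cdots u_n$, $n\ge2$, $u_i\in X\cup Y$, alternating between $X$ and $Y$; similar = beginning in the same set and ending in the same set); equivalently, $XY$ is a code and the product $XY$ is unambiguous (each element of $XY$ has exactly one factorization $xy$ with $x\in X,y\in Y$). $Z$ is an alt-induced code if $Z=XY$ for some alternative code $(X,Y)$. *)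

theory Defs
  imports Main
begin

text \<open>Words over a finite alphabet 'a are lists; A^+ is the set of non-empty lists.\<close>

definition concat_set :: "'a list set \<Rightarrow> 'a list set \<Rightarrow> 'a list set" where
  "concat_set X Y = {x @ y | x y. x \<in> X \<and> y \<in> Y}"

fun set_pow :: "'a list set \<Rightarrow> nat \<Rightarrow> 'a list set" where
  "set_pow Z 0 = {[]}"
| "set_pow Z (Suc 0) = Z"
| "set_pow Z (Suc (Suc n)) = concat_set (set_pow Z (Suc n)) Z"

definition is_code :: "'a list set \<Rightarrow> bool" where
  "is_code Z \<longleftrightarrow> [] \<notin> Z \<and>
     (\<forall>us vs. set us \<subseteq> Z \<longrightarrow> set vs \<subseteq> Z \<longrightarrow> concat us = concat vs \<longrightarrow> us = vs)"

text \<open>An alternative factorization on (X,Y): a list of labelled factors (True = from X,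
  False = from Y), of length at least 2, with alternating labels.\<close>
definition alt_fact :: "'a list set \<Rightarrow> 'a list set \<Rightarrow> (bool \<times> 'a list) list \<Rightarrow> bool" where
  "alt_fact X Y fs \<longleftrightarrow> length fs \<ge> 2 \<and>
     (\<forall>i < length fs. snd (fs ! i) \<in> (if fst (fs ! i) then X else Y)) \<and>
     (\<forall>i. Suc i < length fs \<longrightarrow> fst (fs ! Suc i) = (\<not> fst (fs ! i)))"

definition alternative_code :: "'a list set \<Rightarrow> 'a list set \<Rightarrow> bool" where
  "alternative_code X Y \<longleftrightarrow> X \<noteq> {} \<and> Y \<noteq> {} \<and> [] \<notin> X \<and> [] \<notin> Y \<and>
     (\<forall>fs gs. alt_fact X Y fs \<longrightarrow> alt_fact X Y gs \<longrightarrow>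
        concat (map snd fs) = concat (map snd gs) \<longrightarrow>
        fst (hd fs) = fst (hd gs) \<longrightarrow> fst (last fs) = fst (last gs) \<longrightarrow> fs = gs)"

definition alt_induced_code :: "'a list set \<Rightarrow> bool" where
  "alt_induced_code Z \<longleftrightarrow> (\<exists>X Y. alternative_code X Y \<and> Z = concat_set X Y)"

end

theory Submission
  imports Defs
begin

text \<open>Write \<open>Z = XY\<close> with \<open>(X, Y)\<close> an alternative code. Then \<open>Z^n = X Y(XY)^(n-1)\<close>, so it
  suffices that \<open>(X, Y(XY)^(n-1))\<close> is an alternative code. Splitting every factor from
  \<open>Y(XY)^(n-1)\<close> into its \<open>2n - 1\<close> alternating factors turns an alternative factorization over
  \<open>(X, Y(XY)^(n-1))\<close> into one over \<open>(X, Y)\<close> of the same word, with the same first type and the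
  same parity of length. This refinement is injective, because the number of pieces a factor is
  split into depends only on its position, so uniqueness over \<open>(X, Y)\<close> transfers.\<close>

fun alternating :: "'a list set \<Rightarrow> 'a list set \<Rightarrow> bool \<Rightarrow> 'a list list \<Rightarrow> bool" where
  "alternating X Y b [] \<longleftrightarrow> True"
| "alternating X Y b (w # ws) \<longleftrightarrow> w \<in> (if b then X else Y) \<and> alternating X Y (\<not> b) ws"

lemma alternating_append:
  "alternating X Y b (us @ vs) \<longleftrightarrow>
     alternating X Y b us \<and> alternating X Y (even (length us) = b) vs"
  by (induction us arbitrary: b) auto

lemma alternating_iff_nth:
  "alternating X Y b ws \<longleftrightarrow> (\<forall>i < length ws. ws ! i \<in> (if even i = b then X else Y))"
proof (induction ws arbitrary: b)
  case (Cons w ws)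
  have "(\<forall>i < length (w # ws). (w # ws) ! i \<in> (if even i = b then X else Y)) \<longleftrightarrow>
        w \<in> (if b then X else Y) \<and> (\<forall>i < length ws. ws ! i \<in> (if even i = (\<not> b) then X else Y))"
    by (auto simp: nth_Cons less_Suc_eq_0_disj split: nat.splits)
  with Cons.IH show ?case by simp
qed simp

lemma alternating_exists:
  assumes "X \<noteq> {}" and "Y \<noteq> {}"
  shows "\<exists>ws. alternating X Y b ws \<and> length ws = k"
proof (induction k arbitrary: b)
  case (Suc k)
  obtain ws where "alternating X Y (\<not> b) ws" "length ws = k" using Suc by blast
  moreover obtain w where "w \<in> (if b then X else Y)" using assms by (cases b) auto
  ultimately show ?case by (intro exI[of _ "w # ws"]) auto
qed simp

text \<open>\<open>alt_words X Y True 2 = XY\<close> and \<open>alt_words X Y False (2 * m + 1) = Y(XY)^m\<close>.\<close>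

definition alt_words :: "'a list set \<Rightarrow> 'a list set \<Rightarrow> bool \<Rightarrow> nat \<Rightarrow> 'a list set" where
  "alt_words X Y b k = {concat ws | ws. alternating X Y b ws \<and> length ws = k}"

lemma alt_words_one: "alt_words X Y b 1 = (if b then X else Y)"
  by (force simp: alt_words_def length_Suc_conv)

lemma concat_set_alt_words:
  "concat_set (alt_words X Y b k) (alt_words X Y (even k = b) l) = alt_words X Y b (k + l)"
proof (rule set_eqI)
  fix z
  have "z \<in> alt_words X Y b (k + l) \<longleftrightarrow>
        (\<exists>us vs. z = concat us @ concat vs \<and> alternating X Y b us \<and> length us = k
                 \<and> alternating X Y (even k = b) vs \<and> length vs = l)"
  proof
    assume "z \<in> alt_words X Y b (k + l)"
    then obtain ws where ws: "z = concat ws" "alternating X Y b ws" "length ws = k + l"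
      by (auto simp: alt_words_def)
    have "z = concat (take k ws) @ concat (drop k ws)"
      using ws by (simp flip: concat_append)
    moreover have "alternating X Y b (take k ws)" "alternating X Y (even k = b) (drop k ws)"
      using ws alternating_append[of X Y b "take k ws" "drop k ws"] by simp_all
    moreover have "length (take k ws) = k" "length (drop k ws) = l"
      using ws by simp_all
    ultimately show "\<exists>us vs. z = concat us @ concat vs \<and> alternating X Y b us \<and> length us = k
                 \<and> alternating X Y (even k = b) vs \<and> length vs = l"
      by blast
  next
    assume "\<exists>us vs. z = concat us @ concat vs \<and> alternating X Y b us \<and> length us = k
                 \<and> alternating X Y (even k = b) vs \<and> length vs = l"
    then obtain us vs where "z = concat (us @ vs)" "alternating X Y b (us @ vs)"
        "length (us @ vs) = k + l"
      by (auto simp: alternating_append)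
    then show "z \<in> alt_words X Y b (k + l)" unfolding alt_words_def by blast
  qed
  then show "z \<in> concat_set (alt_words X Y b k) (alt_words X Y (even k = b) l) \<longleftrightarrow>
             z \<in> alt_words X Y b (k + l)"
    by (auto simp: concat_set_def alt_words_def)
qed

lemma set_pow_concat_set:
  "set_pow (concat_set X Y) (Suc k) = alt_words X Y True (2 * k + 2)"
proof -
  have XY: "concat_set X Y = alt_words X Y True 2"
    using concat_set_alt_words[of X Y True 1 1] alt_words_one[of X Y True] alt_words_one[of X Y False]
    by (simp add: numeral_2_eq_2)
  show ?thesis
  proof (induction k)
    case (Suc k)
    have "set_pow (concat_set X Y) (Suc (Suc k)) = concat_set (alt_words X Y True (2 * k + 2)) (alt_words X Y True 2)"
      using Suc XY by simp
    also have "\<dots> = alt_words X Y True (2 * Suc k + 2)"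
      using concat_set_alt_words[of X Y True "2 * k + 2" 2] by simp
    finally show ?case .
  qed (simp add: XY numeral_2_eq_2)
qed

lemma concat_set_alt_words_odd:
  "concat_set X (alt_words X Y False (2 * m + 1)) = alt_words X Y True (2 * m + 2)"
  using concat_set_alt_words[of X Y True 1 "2 * m + 1"] alt_words_one[of X Y True] by simp

definition alt_labels :: "bool \<Rightarrow> 'b list \<Rightarrow> (bool \<times> 'b) list" where
  "alt_labels b ws = map (\<lambda>i. (even i = b, ws ! i)) [0..<length ws]"

lemma length_alt_labels [simp]: "length (alt_labels b ws) = length ws"
  by (simp add: alt_labels_def)

lemma nth_alt_labels [simp]: "i < length ws \<Longrightarrow> alt_labels b ws ! i = (even i = b, ws ! i)"
  by (simp add: alt_labels_def)

lemma map_snd_alt_labels [simp]: "map snd (alt_labels b ws) = ws"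
  by (simp add: alt_labels_def comp_def map_nth)

lemma alt_labels_eq_Nil_iff [simp]: "alt_labels b ws = [] \<longleftrightarrow> ws = []"
  by (simp add: alt_labels_def)

lemma fst_hd_alt_labels: "ws \<noteq> [] \<Longrightarrow> fst (hd (alt_labels b ws)) = b"
  by (simp add: hd_conv_nth)

lemma fst_last_alt_labels:
  assumes "ws \<noteq> []"
  shows "fst (last (alt_labels b ws)) = (odd (length ws) = b)"
proof -
  have "last (alt_labels b ws) = (even (length ws - 1) = b, ws ! (length ws - 1))"
    using assms by (simp add: last_conv_nth)
  with assms show ?thesis by (cases "length ws") auto
qed

lemma alt_fact_alt_labels: "alt_fact X Y (alt_labels b ws) \<longleftrightarrow> 2 \<le> length ws \<and> alternating X Y b ws"
  by (auto simp: alt_fact_def alternating_iff_nth)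

lemma alt_fact_eq_alt_labels:
  assumes "alt_fact X Y fs"
  shows "fs = alt_labels (fst (hd fs)) (map snd fs)"
proof (rule nth_equalityI)
  have "fs \<noteq> []" using assms by (auto simp: alt_fact_def)
  have "i < length fs \<longrightarrow> fst (fs ! i) = (even i = fst (hd fs))" for i
    using assms \<open>fs \<noteq> []\<close> by (induction i) (auto simp: alt_fact_def hd_conv_nth)
  then show "fs ! i = alt_labels (fst (hd fs)) (map snd fs) ! i" if "i < length fs" for i
    using that by (simp add: prod_eq_iff)
qed simp

lemma alternative_code_iff:
  "alternative_code X Y \<longleftrightarrow> X \<noteq> {} \<and> Y \<noteq> {} \<and> [] \<notin> X \<and> [] \<notin> Y \<and>
     (\<forall>b ws ws'. alternating X Y b ws \<longrightarrow> alternating X Y b ws' \<longrightarrow>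
        2 \<le> length ws \<longrightarrow> 2 \<le> length ws' \<longrightarrow> even (length ws) = even (length ws') \<longrightarrow>
        concat ws = concat ws' \<longrightarrow> ws = ws')"
  (is "_ \<longleftrightarrow> _ \<and> _ \<and> _ \<and> _ \<and> ?unique")
proof -
  have "(\<forall>fs gs. alt_fact X Y fs \<longrightarrow> alt_fact X Y gs \<longrightarrow>
          concat (map snd fs) = concat (map snd gs) \<longrightarrow>
          fst (hd fs) = fst (hd gs) \<longrightarrow> fst (last fs) = fst (last gs) \<longrightarrow> fs = gs) \<longleftrightarrow> ?unique"
  proof
    assume unique_fact: "\<forall>fs gs. alt_fact X Y fs \<longrightarrow> alt_fact X Y gs \<longrightarrow>
          concat (map snd fs) = concat (map snd gs) \<longrightarrow>
          fst (hd fs) = fst (hd gs) \<longrightarrow> fst (last fs) = fst (last gs) \<longrightarrow> fs = gs"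
    show ?unique
    proof (intro allI impI)
      fix b ws ws'
      assume "alternating X Y b ws" "alternating X Y b ws'" "2 \<le> length ws" "2 \<le> length ws'"
        "even (length ws) = even (length ws')" "concat ws = concat ws'"
      moreover from this have "ws \<noteq> []" "ws' \<noteq> []" by auto
      ultimately have "alt_labels b ws = alt_labels b ws'"
        using unique_fact[rule_format, of "alt_labels b ws" "alt_labels b ws'"]
        by (simp add: alt_fact_alt_labels fst_hd_alt_labels fst_last_alt_labels)
      then show "ws = ws'" by (metis map_snd_alt_labels)
    qed
  next
    assume ?unique
    show "\<forall>fs gs. alt_fact X Y fs \<longrightarrow> alt_fact X Y gs \<longrightarrow>
          concat (map snd fs) = concat (map snd gs) \<longrightarrow>
          fst (hd fs) = fst (hd gs) \<longrightarrow> fst (last fs) = fst (last gs) \<longrightarrow> fs = gs"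
    proof (intro allI impI)
      fix fs gs
      assume F: "alt_fact X Y fs" and G: "alt_fact X Y gs"
        and "concat (map snd fs) = concat (map snd gs)"
        and hd_eq: "fst (hd fs) = fst (hd gs)" and last_eq: "fst (last fs) = fst (last gs)"
      define b where "b = fst (hd fs)"
      define ws ws' where "ws = map snd fs" and "ws' = map snd gs"
      have fs: "fs = alt_labels b ws" and gs: "gs = alt_labels b ws'"
        using alt_fact_eq_alt_labels[OF F] alt_fact_eq_alt_labels[OF G] hd_eq
        by (simp_all add: b_def ws_def ws'_def)
      have "alternating X Y b ws" "2 \<le> length ws" "alternating X Y b ws'" "2 \<le> length ws'"
        using F G fs gs by (simp_all add: alt_fact_alt_labels)
      moreover have "even (length ws) = even (length ws')"
      proof -
        have "ws \<noteq> []" "ws' \<noteq> []" using \<open>2 \<le> length ws\<close> \<open>2 \<le> length ws'\<close> by auto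
        then show ?thesis
          using last_eq fs gs fst_last_alt_labels[of ws b] fst_last_alt_labels[of ws' b] by auto
      qed
      moreover have "concat ws = concat ws'"
        using \<open>concat (map snd fs) = concat (map snd gs)\<close> by (simp add: ws_def ws'_def)
      ultimately have "ws = ws'" using \<open>?unique\<close> by blast
      then show "fs = gs" using fs gs by simp
    qed
  qed
  then show ?thesis by (simp add: alternative_code_def)
qed

definition refine :: "'a list set \<Rightarrow> 'a list set \<Rightarrow> nat \<Rightarrow> bool \<Rightarrow> 'a list \<Rightarrow> 'a list list" where
  "refine X Y m b w =
     (if b then [w] else SOME ws. alternating X Y False ws \<and> length ws = 2 * m + 1 \<and> concat ws = w)"

fun expand :: "'a list set \<Rightarrow> 'a list set \<Rightarrow> nat \<Rightarrow> bool \<Rightarrow> 'a list list \<Rightarrow> 'a list list" where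
  "expand X Y m b [] = []"
| "expand X Y m b (w # ws) = refine X Y m b w @ expand X Y m (\<not> b) ws"

lemma refine:
  assumes "w \<in> (if b then X else alt_words X Y False (2 * m + 1))"
  shows "alternating X Y b (refine X Y m b w)" and "concat (refine X Y m b w) = w"
    and "length (refine X Y m b w) = (if b then 1 else 2 * m + 1)"
proof -
  have "alternating X Y b (refine X Y m b w) \<and> concat (refine X Y m b w) = w
        \<and> length (refine X Y m b w) = (if b then 1 else 2 * m + 1)"
  proof (cases b)
    case False
    then have "\<exists>ws. alternating X Y False ws \<and> length ws = 2 * m + 1 \<and> concat ws = w"
      using assms by (auto simp: alt_words_def)
    from someI_ex[OF this] False show ?thesis by (simp add: refine_def)
  qed (use assms in \<open>simp add: refine_def\<close>)
  then show "alternating X Y b (refine X Y m b w)" and "concat (refine X Y m b w) = w"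
    and "length (refine X Y m b w) = (if b then 1 else 2 * m + 1)" by simp_all
qed

lemma refine_ne_Nil:
  assumes "w \<in> (if b then X else alt_words X Y False (2 * m + 1))"
  shows "refine X Y m b w \<noteq> []"
  using refine(3)[OF assms] by (cases b) auto

lemma expand:
  assumes "alternating X (alt_words X Y False (2 * m + 1)) b ws"
  shows "alternating X Y b (expand X Y m b ws) \<and> concat (expand X Y m b ws) = concat ws
    \<and> even (length (expand X Y m b ws)) = even (length ws) \<and> length ws \<le> length (expand X Y m b ws)"
  using assms
proof (induction ws arbitrary: b)
  case (Cons w ws)
  have w: "w \<in> (if b then X else alt_words X Y False (2 * m + 1))"
    using Cons.prems by (simp split: if_splits)
  have "odd (length (refine X Y m b w))" "0 < length (refine X Y m b w)"
    using refine(3)[OF w] by (simp_all del: length_greater_0_conv)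
  moreover have "alternating X Y (\<not> b) (expand X Y m (\<not> b) ws) \<and> concat (expand X Y m (\<not> b) ws) = concat ws
    \<and> even (length (expand X Y m (\<not> b) ws)) = even (length ws) \<and> length ws \<le> length (expand X Y m (\<not> b) ws)"
    using Cons.IH[of "\<not> b"] Cons.prems by simp
  ultimately show ?case
    using refine(1,2)[OF w] by (auto simp: alternating_append simp del: length_greater_0_conv)
qed simp

lemma expand_inj:
  assumes "alternating X (alt_words X Y False (2 * m + 1)) b ws"
    and "alternating X (alt_words X Y False (2 * m + 1)) b ws'"
    and "expand X Y m b ws = expand X Y m b ws'"
  shows "ws = ws'"
  using assms
proof (induction ws arbitrary: b ws')
  case Nil
  show ?case
  proof (cases ws')
    case (Cons w' ws'')
    with Nil.prems have "refine X Y m b w' = []" by simp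
    moreover have "w' \<in> (if b then X else alt_words X Y False (2 * m + 1))"
      using Nil.prems Cons by (simp split: if_splits)
    ultimately show ?thesis using refine_ne_Nil by blast
  qed simp
next
  case (Cons w ws)
  have w: "w \<in> (if b then X else alt_words X Y False (2 * m + 1))"
    using Cons.prems by (simp split: if_splits)
  obtain w' ws'' where ws': "ws' = w' # ws''"
    using Cons.prems refine_ne_Nil[OF w] by (cases ws') auto
  have w': "w' \<in> (if b then X else alt_words X Y False (2 * m + 1))"
    using Cons.prems ws' by (simp split: if_splits)
  have "refine X Y m b w = refine X Y m b w' \<and> expand X Y m (\<not> b) ws = expand X Y m (\<not> b) ws''"
    using Cons.prems(3) refine(3)[OF w] refine(3)[OF w'] by (simp add: ws' append_eq_append_conv)
  then have "w = w'"
    using refine(2)[OF w] refine(2)[OF w'] by metis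
  moreover have "ws = ws''"
  proof (rule Cons.IH)
    show "alternating X (alt_words X Y False (2 * m + 1)) (\<not> b) ws"
      and "alternating X (alt_words X Y False (2 * m + 1)) (\<not> b) ws''"
      using Cons.prems ws' by simp_all
  qed (use \<open>refine X Y m b w = refine X Y m b w' \<and> _\<close> in blast)
  ultimately show ?case by (simp add: ws')
qed

lemma alternative_code_alt_words:
  assumes "alternative_code X Y"
  shows "alternative_code X (alt_words X Y False (2 * m + 1))"
proof -
  let ?Y' = "alt_words X Y False (2 * m + 1)"
  have ne: "X \<noteq> {}" "Y \<noteq> {}" "[] \<notin> X" "[] \<notin> Y"
    using assms by (simp_all add: alternative_code_iff)
  have unique: "\<And>b ws ws'. alternating X Y b ws \<Longrightarrow> alternating X Y b ws' \<Longrightarrow>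
      2 \<le> length ws \<Longrightarrow> 2 \<le> length ws' \<Longrightarrow> even (length ws) = even (length ws') \<Longrightarrow>
      concat ws = concat ws' \<Longrightarrow> ws = ws'"
    using assms unfolding alternative_code_iff by blast
  have "?Y' \<noteq> {}"
    using alternating_exists[OF ne(1,2), of False "2 * m + 1"] by (auto simp: alt_words_def)
  moreover have "[] \<notin> ?Y'"
  proof
    assume "[] \<in> ?Y'"
    then obtain w ws where "alternating X Y False (w # ws)" "concat (w # ws) = []"
      by (auto simp: alt_words_def length_Suc_conv)
    then show False using ne(4) by simp
  qed
  moreover have "ws = ws'"
    if "alternating X ?Y' b ws" "alternating X ?Y' b ws'" "2 \<le> length ws" "2 \<le> length ws'"
      "even (length ws) = even (length ws')" "concat ws = concat ws'" for b ws ws'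
  proof -
    have "expand X Y m b ws = expand X Y m b ws'"
      using unique expand[OF that(1)] expand[OF that(2)] that(3-6) by (metis le_trans)
    then show ?thesis using expand_inj that(1,2) by blast
  qed
  ultimately show ?thesis using ne by (simp add: alternative_code_iff)
qed

theorem propositionL:
  fixes Z :: "('a::finite) list set"
  assumes "alt_induced_code Z" and "n \<ge> 1"
  shows "alt_induced_code (set_pow Z n)"
proof -
  obtain X Y where XY: "alternative_code X Y" and Z: "Z = concat_set X Y"
    using assms(1) by (auto simp: alt_induced_code_def)
  obtain m where n: "n = Suc m" using assms(2) by (cases n) auto
  have "set_pow Z n = concat_set X (alt_words X Y False (2 * m + 1))"
    by (simp only: Z n set_pow_concat_set concat_set_alt_words_odd)
  then show ?thesis
    using alternative_code_alt_words[OF XY] by (auto simp: alt_induced_code_def)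
qed

end
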